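(* Let $n,m,\ell$ be integers with $n-1\ge m\ge \ell\ge 0$. Then $$\sum_{j=0}^{n-m-2}\binom{n-m+\ell-3-2j}{\ell-1-j}\,\mathcal Y_n\big(2^{\{m-\ell+1+j\}},1^{\{n-m+\ell-3-2j\}}\big)=\frac{1}{n(m+1)}\binom{n-1}{m}\left(\binom{n}{\ell}-\binom{m+1}{\ell}\right).$$ In particular (case $\ell=1$), $\mathcal Y_n(2^{\{m\}},1^{\{n-m-2\}})=\frac{n-m-1}{n(m+1)}\binom{n-1}{m}$.
   Context: Let $\zeta_n=e^{2\pi\sqrt{-1}/n}$. For integers $s_1,\dots,s_m$, define $\mathfrak Z_n(s_1,\dots,s_m):=\sum_{1\le i_1<\cdots<i_m\le n-1}\prod_{k=1}^{m}(1-\zeta_n^{i_k})^{-s_k}$ (equal to $1$ if $m=0$ and to $0$ if $m>n-1$). Define $\mathcal Y_n(s_1,\dots,s_m):=\sum_{\sigma}\mathfrak Z_n(\sigma)$, where $\sigma$ runs over all distinct sequences obtained by rearranging $(s_1,\dots,s_m)$ (each distinct rearrangement counted once); $\mathcal Y_n$ of the empty sequence is $1$. Notation: $a^{\{k\}}$ denotes the block $a,a,\dots,a$ of length $k$; any term $\mathcal Y_n(\dots)$ in which some block has negative length is interpreted as $0$. Binomial coefficients $\binom{a}{b}$ are $0$ when $b<0$ or $b>a\ge0$. *)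

theory Defs
  imports "HOL-Analysis.Analysis" "HOL-Combinatorics.Multiset_Permutations"
begin

definition zeta :: "nat \<Rightarrow> complex" where
  "zeta n = exp (2 * pi * \<i> / of_nat n)"

definition ZZ :: "nat \<Rightarrow> int list \<Rightarrow> complex" where
  "ZZ n s = (\<Sum>is \<in> {is. sorted_wrt (<) is \<and> length is = length s \<and> set is \<subseteq> {1..n-1}}.
              \<Prod>k<length s. (1 - zeta n ^ (is ! k)) powi (- (s ! k)))"

definition YY :: "nat \<Rightarrow> int list \<Rightarrow> complex" where
  "YY n s = (\<Sum>\<sigma> \<in> permutations_of_multiset (mset s). ZZ n \<sigma>)"

text \<open>Binomial coefficient with integer arguments, for a >= 0: zero if b < 0 or b > a.
  (Only used where a >= 0 or where the accompanying Y-term vanishes.)\<close>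
definition binomZ :: "int \<Rightarrow> int \<Rightarrow> complex" where
  "binomZ a b = (if a < 0 \<or> b < 0 then 0 else of_nat (nat a choose nat b))"

definition Y21 :: "nat \<Rightarrow> int \<Rightarrow> int \<Rightarrow> complex" where
  "Y21 n p q = (if p < 0 \<or> q < 0 then 0 else YY n (replicate (nat p) 2 @ replicate (nat q) 1))"

end

theory Submission
  imports Defs
begin

(* Write x_i = 1 / (1 - zeta^i) for 0 < i < n. Then Y_n(2^a, 1^b) is the monomial symmetric
   function m_(2^a 1^b) of x_1, ..., x_(n-1), while the elementary symmetric functions are
   e_k = binom(n, k+1) / n because prod_i (1 + x_i t) = (1/n) sum_(j<n) (1 + t)^j.
   Recording a pair of index sets P, Q by P Un Q and P Int Q gives
   e_p e_q = sum_a binom(p+q-2a, p-a) m_(2^a 1^(p+q-2a)).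
   For p = m and q = n-l-1 the terms with a < m-l would need more than n-1 indices and vanish,
   the term a = m-l equals binom(n-1-m+l, l) e_(n-1) e_(m-l), and the remaining terms form the
   left-hand side of the identity; the values of the e_k then give the right-hand side. *)

section \<open>Elementary and monomial symmetric functions\<close>

definition esym :: "'i set \<Rightarrow> ('i \<Rightarrow> 'a::comm_semiring_1) \<Rightarrow> nat \<Rightarrow> 'a" where
  "esym I x k = (\<Sum>P\<in>{P. P \<subseteq> I \<and> card P = k}. \<Prod>i\<in>P. x i)"

(* m_(2^a 1^b): the monomial attached to A \<subseteq> S has exponent 2 on A and 1 on S - A. *)
definition msym21 :: "'i set \<Rightarrow> ('i \<Rightarrow> 'a::comm_semiring_1) \<Rightarrow> nat \<Rightarrow> nat \<Rightarrow> 'a" where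
  "msym21 I x a b = (\<Sum>S\<in>{S. S \<subseteq> I \<and> card S = a + b}. \<Sum>A\<in>{A. A \<subseteq> S \<and> card A = a}.
                      (\<Prod>i\<in>S. x i) * (\<Prod>i\<in>A. x i))"

lemma finite_subsets_with_card: "finite I \<Longrightarrow> finite {S. S \<subseteq> I \<and> card S = k}"
  by (rule finite_subset[of _ "Pow I"]) auto

lemma coeff_prod_linear_factors:
  fixes x :: "'i \<Rightarrow> 'a::comm_semiring_1"
  assumes "finite I"
  shows "coeff (\<Prod>i\<in>I. [:1, x i:]) k = esym I x k"
proof -
  have "(\<Prod>i\<in>I. [:1, x i:]) = (\<Prod>i\<in>I. monom (x i) 1 + 1)"
    by (intro prod.cong refl) (simp add: monom_Suc one_pCons monom_0)
  also have "\<dots> = (\<Sum>P\<in>Pow I. (\<Prod>i\<in>P. monom (x i) 1) * (\<Prod>i\<in>I-P. 1))"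
    by (rule prod_add[OF assms])
  also have "\<dots> = (\<Sum>P\<in>Pow I. monom (\<Prod>i\<in>P. x i) (card P))"
  proof (intro sum.cong refl)
    fix P assume "P \<in> Pow I"
    then have "finite P" using assms finite_subset by auto
    then show "(\<Prod>i\<in>P. monom (x i) 1) * (\<Prod>i\<in>I-P. 1) = monom (\<Prod>i\<in>P. x i) (card P)"
      by (induction P rule: finite_induct) (auto simp: mult_monom)
  qed
  finally have "coeff (\<Prod>i\<in>I. [:1, x i:]) k = (\<Sum>P\<in>Pow I. if card P = k then \<Prod>i\<in>P. x i else 0)"
    by (simp add: coeff_sum coeff_monom)
  also have "\<dots> = esym I x k"
    unfolding esym_def using assms by (subst sum.inter_filter[symmetric]) (auto intro: sum.cong)
  finally show ?thesis .
qed

lemma card_subset_pairs_with_union_inter: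
  assumes S: "finite S" and A: "A \<subseteq> S" "card A = a"
    and "card S = p + q - a" "a \<le> p" "a \<le> q"
  shows "card {(P, Q). card P = p \<and> card Q = q \<and> P \<union> Q = S \<and> P \<inter> Q = A}
           = (p + q - 2 * a) choose (p - a)"
proof -
  have fin: "finite A" "finite (S - A)" using A S finite_subset by auto
  have "bij_betw (\<lambda>C. (A \<union> C, S - C)) {C. C \<subseteq> S - A \<and> card C = p - a}
          {(P, Q). card P = p \<and> card Q = q \<and> P \<union> Q = S \<and> P \<inter> Q = A}"
  proof (rule bij_betw_byWitness[where f' = "\<lambda>(P, Q). P - A"])
    show "(\<lambda>(P, Q). P - A) ` {(P, Q). card P = p \<and> card Q = q \<and> P \<union> Q = S \<and> P \<inter> Q = A}
            \<subseteq> {C. C \<subseteq> S - A \<and> card C = p - a}"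
      using S A by (auto simp: card_Diff_subset)
    show "(\<lambda>C. (A \<union> C, S - C)) ` {C. C \<subseteq> S - A \<and> card C = p - a}
            \<subseteq> {(P, Q). card P = p \<and> card Q = q \<and> P \<union> Q = S \<and> P \<inter> Q = A}"
    proof clarify
      fix C assume C: "C \<subseteq> S - A" "card C = p - a"
      then have "finite C" "A \<inter> C = {}" "C \<subseteq> S" using fin finite_subset by auto
      then have "card (A \<union> C) = card A + card C" "card (S - C) = card S - card C"
        using fin S by (simp_all add: card_Un_disjoint card_Diff_subset)
      then show "card (A \<union> C) = p \<and> card (S - C) = q \<and> A \<union> C \<union> (S - C) = S \<and> (A \<union> C) \<inter> (S - C) = A"
        using assms fin C by (auto simp: card_Un_disjoint card_Diff_subset)
    qed
  qed (use A in auto)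
  then have "card {(P, Q). card P = p \<and> card Q = q \<and> P \<union> Q = S \<and> P \<inter> Q = A}
               = card {C. C \<subseteq> S - A \<and> card C = p - a}"
    by (simp add: bij_betw_same_card)
  also have "\<dots> = (p + q - 2 * a) choose (p - a)"
    using assms fin by (simp add: n_subsets card_Diff_subset mult_2)
  finally show ?thesis .
qed

lemma sum_subset_pairs_by_union_inter:
  fixes g :: "'i set \<Rightarrow> 'i set \<Rightarrow> 'a::comm_semiring_1"
  assumes I: "finite I"
  shows "(\<Sum>P\<in>{P. P \<subseteq> I \<and> card P = p}. \<Sum>Q\<in>{Q. Q \<subseteq> I \<and> card Q = q}. g (P \<union> Q) (P \<inter> Q))
       = (\<Sum>a\<le>min p q. of_nat ((p + q - 2 * a) choose (p - a)) *
            (\<Sum>S\<in>{S. S \<subseteq> I \<and> card S = p + q - a}. \<Sum>A\<in>{A. A \<subseteq> S \<and> card A = a}. g S A))"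
  (is "?lhs = ?rhs")
proof -
  define D where "D = {P. P \<subseteq> I \<and> card P = p} \<times> {Q. Q \<subseteq> I \<and> card Q = q}"
  define U where "U = (SIGMA a:{..min p q}. SIGMA S:{S. S \<subseteq> I \<and> card S = p + q - a}.
                         {A. A \<subseteq> S \<and> card A = a})"
  define \<phi> :: "'i set \<times> 'i set \<Rightarrow> nat \<times> 'i set \<times> 'i set" where "\<phi> = (\<lambda>(P, Q). (card (P \<inter> Q), P \<union> Q, P \<inter> Q))"
  define c where "c = (\<lambda>a. of_nat ((p + q - 2 * a) choose (p - a)) :: 'a)"
  have fin_D: "finite D" and fin_U: "finite U"
    unfolding D_def U_def using I
    by (auto intro!: finite_SigmaI finite_subsets_with_card intro: finite_subset)
  have \<phi>_D: "\<phi> ` D \<subseteq> U"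
  proof
    fix y assume "y \<in> \<phi> ` D"
    then obtain P Q where y: "y = \<phi> (P, Q)"
      and PQ: "P \<subseteq> I" "Q \<subseteq> I" "card P = p" "card Q = q"
      unfolding D_def by auto
    have fin: "finite P" "finite Q" using PQ I finite_subset by auto
    have "card (P \<union> Q) + card (P \<inter> Q) = p + q" using card_Un_Int[OF fin] PQ by simp
    moreover have "card (P \<inter> Q) \<le> p" "card (P \<inter> Q) \<le> q" using PQ fin by (auto intro: card_mono)
    ultimately show "y \<in> U" unfolding y \<phi>_def U_def using PQ by auto
  qed
  have fibre: "card {z \<in> D. \<phi> z = (a, S, A)} = (p + q - 2 * a) choose (p - a)" if "(a, S, A) \<in> U" for a S A
  proof -
    from that have "S \<subseteq> I" "A \<subseteq> S" "card A = a" "card S = p + q - a" "a \<le> p" "a \<le> q"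
      unfolding U_def by auto
    moreover from this have "{z \<in> D. \<phi> z = (a, S, A)}
        = {(P, Q). card P = p \<and> card Q = q \<and> P \<union> Q = S \<and> P \<inter> Q = A}"
      unfolding D_def \<phi>_def by auto
    ultimately show ?thesis using I by (simp add: card_subset_pairs_with_union_inter finite_subset)
  qed
  have "?lhs = (\<Sum>z\<in>D. (\<lambda>(a, S, A). g S A) (\<phi> z))"
    unfolding D_def \<phi>_def sum.cartesian_product by (simp add: case_prod_beta)
  also have "\<dots> = (\<Sum>y\<in>U. \<Sum>z\<in>{z \<in> D. \<phi> z = y}. (\<lambda>(a, S, A). g S A) (\<phi> z))"
    using fin_D fin_U \<phi>_D by (rule sum.group[symmetric])
  also have "\<dots> = (\<Sum>(a, S, A)\<in>U. c a * g S A)"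
    unfolding c_def by (intro sum.cong refl) (auto simp: fibre)
  also have "\<dots> = (\<Sum>a\<le>min p q. \<Sum>(S, A)\<in>(SIGMA S:{S. S \<subseteq> I \<and> card S = p + q - a}.
                                    {A. A \<subseteq> S \<and> card A = a}). c a * g S A)"
    unfolding U_def using I
    by (subst sum.Sigma[symmetric]) (auto intro!: finite_SigmaI finite_subsets_with_card intro: finite_subset)
  also have "\<dots> = ?rhs"
    unfolding c_def sum_distrib_left using I
    by (intro sum.cong refl, subst sum.Sigma[symmetric]) (auto intro!: finite_subsets_with_card intro: finite_subset)
  finally show ?thesis .
qed

lemma esym_mult:
  assumes "finite I"
  shows "esym I x p * esym I x q
           = (\<Sum>a\<le>min p q. of_nat ((p + q - 2 * a) choose (p - a)) * msym21 I x a (p + q - 2 * a))"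
proof -
  have "esym I x p * esym I x q
          = (\<Sum>P\<in>{P. P \<subseteq> I \<and> card P = p}. \<Sum>Q\<in>{Q. Q \<subseteq> I \<and> card Q = q}.
               (\<Prod>i\<in>P \<union> Q. x i) * (\<Prod>i\<in>P \<inter> Q. x i))"
    unfolding esym_def sum_product
  proof (intro sum.cong refl)
    fix P Q assume "P \<in> {P. P \<subseteq> I \<and> card P = p}" "Q \<in> {Q. Q \<subseteq> I \<and> card Q = q}"
    then have "finite P" "finite Q" using assms finite_subset by auto
    then show "prod x P * prod x Q = (\<Prod>i\<in>P \<union> Q. x i) * (\<Prod>i\<in>P \<inter> Q. x i)"
      by (simp add: prod.union_inter)
  qed
  also have "\<dots> = (\<Sum>a\<le>min p q. of_nat ((p + q - 2 * a) choose (p - a)) *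
                     (\<Sum>S\<in>{S. S \<subseteq> I \<and> card S = p + q - a}. \<Sum>A\<in>{A. A \<subseteq> S \<and> card A = a}.
                        (\<Prod>i\<in>S. x i) * (\<Prod>i\<in>A. x i)))"
    by (rule sum_subset_pairs_by_union_inter[OF assms])
  also have "\<dots> = (\<Sum>a\<le>min p q. of_nat ((p + q - 2 * a) choose (p - a)) * msym21 I x a (p + q - 2 * a))"
    unfolding msym21_def by (intro sum.cong refl) (simp add: numeral_2_eq_2)
  finally show ?thesis .
qed

lemma msym21_eq_0:
  assumes "finite I" "card I < a + b"
  shows "msym21 I x a b = 0"
proof -
  have "{S. S \<subseteq> I \<and> card S = a + b} = {}"
    using assms card_mono[OF assms(1)] by (metis (mono_tags, lifting) empty_Collect_eq not_le)
  then show ?thesis unfolding msym21_def by (simp only: sum.empty)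
qed

lemma msym21_top:
  assumes "finite I" "a \<le> card I"
  shows "msym21 I x a (card I - a) = esym I x (card I) * esym I x a"
proof -
  have top: "{S. S \<subseteq> I \<and> card S = card I} = {I}"
    using card_subset_eq[OF assms(1)] by blast
  show ?thesis
    unfolding msym21_def esym_def using assms(2) by (simp add: top sum_distrib_left)
qed

lemma esym_mult_split:
  assumes I: "finite I" "card I = d" and pq: "p \<le> d" "q \<le> d" "d \<le> p + q"
  shows "esym I x p * esym I x q
           = of_nat ((2 * d - p - q) choose (d - q)) * esym I x d * esym I x (p + q - d)
             + (\<Sum>k<min (d - p) (d - q). of_nat ((2 * d - p - q - 2 - 2 * k) choose (d - q - 1 - k))
                  * msym21 I x (p + q - d + 1 + k) (2 * d - p - q - 2 - 2 * k))"
proof -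
  define c where "c = p + q - d"
  define r where "r = min (d - p) (d - q)"
  define T where "T a = of_nat ((p + q - 2 * a) choose (p - a)) * msym21 I x a (p + q - 2 * a)" for a
  have "min p q = c + r"
    using pq unfolding c_def r_def by linarith
  then have "esym I x p * esym I x q = (\<Sum>a\<le>c + r. T a)"
    unfolding esym_mult[OF I(1)] T_def by simp
  also have "\<dots> = (\<Sum>a<c. T a) + (\<Sum>k\<le>r. T (c + k))"
    by (induction r) (simp_all add: lessThan_Suc_atMost[symmetric] add.assoc)
  also have "(\<Sum>a<c. T a) = 0"
    unfolding T_def using I pq by (intro sum.neutral ballI) (simp add: c_def msym21_eq_0)
  also have "(\<Sum>k\<le>r. T (c + k)) = T c + (\<Sum>k<r. T (c + Suc k))"
    by (simp add: sum.atMost_shift)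
  also have "T c = of_nat ((2 * d - p - q) choose (d - q)) * esym I x d * esym I x (p + q - d)"
  proof -
    have "p + q - 2 * c = d - c" "p - c = d - q" "2 * d - p - q = d - c" using pq by (auto simp: c_def)
    then show ?thesis
      unfolding T_def using msym21_top[OF I(1), of c x] I pq by (simp add: c_def mult.assoc)
  qed
  also have "(\<Sum>k<r. T (c + Suc k))
     = (\<Sum>k<r. of_nat ((2 * d - p - q - 2 - 2 * k) choose (d - q - 1 - k))
                  * msym21 I x (p + q - d + 1 + k) (2 * d - p - q - 2 - 2 * k))"
  proof (intro sum.cong refl)
    fix k assume "k \<in> {..<r}"
    then have "p + q - 2 * (c + Suc k) = 2 * d - p - q - 2 - 2 * k" "p - (c + Suc k) = d - q - 1 - k"
      "c + Suc k = p + q - d + 1 + k" using pq by (auto simp: c_def r_def)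
    then show "T (c + Suc k) = of_nat ((2 * d - p - q - 2 - 2 * k) choose (d - q - 1 - k))
                  * msym21 I x (p + q - d + 1 + k) (2 * d - p - q - 2 - 2 * k)"
      unfolding T_def by simp
  qed
  finally show ?thesis by (simp add: r_def)
qed

section \<open>Roots of unity\<close>

definition zeta_weight :: "nat \<Rightarrow> nat \<Rightarrow> complex" where
  "zeta_weight n i = inverse (1 - zeta n ^ i)"

lemma zeta_power: "zeta n ^ k = exp (2 * of_real pi * \<i> * of_nat k / of_nat n)"
  unfolding zeta_def by (simp add: exp_of_nat_mult[symmetric] algebra_simps)

lemma zeta_power_eq_1_iff: "n \<ge> 1 \<Longrightarrow> zeta n ^ k = 1 \<longleftrightarrow> n dvd k"
  unfolding zeta_power by (rule complex_root_unity_eq_1)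

lemma zeta_power_inj: "j < n \<Longrightarrow> k < n \<Longrightarrow> zeta n ^ j = zeta n ^ k \<longleftrightarrow> j = k"
  unfolding zeta_power by (simp add: complex_root_unity_eq)

lemma zeta_power_neq_1: "1 \<le> k \<Longrightarrow> k < n \<Longrightarrow> zeta n ^ k \<noteq> 1"
  by (subst zeta_power_eq_1_iff) (auto dest: dvd_imp_le)

(* Both sides have degree < n and agree at 0 and at the points zeta^k - 1, 0 < k < n,
   where a factor on the left and the geometric sum on the right vanish. *)
lemma prod_linear_zeta_weight:
  assumes n: "n \<ge> 1"
  shows "(\<Prod>i\<in>{1..n-1}. [:1, zeta_weight n i:]) = smult (1 / of_nat n) (\<Sum>j<n. [:1, 1:] ^ j)"
proof (rule poly_eqI_degree)
  let ?A = "insert 0 ((\<lambda>i. zeta n ^ i - 1) ` {1..n-1})"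
  have "inj_on (\<lambda>i. zeta n ^ i - 1) {1..n-1}"
    using n by (auto simp: inj_on_def zeta_power_inj)
  moreover have "0 \<notin> (\<lambda>i. zeta n ^ i - 1) ` {1..n-1}"
    using zeta_power_neq_1 n by force
  ultimately have card_A: "card ?A = n"
    using n by (simp add: card_image)
  have "degree (\<Prod>i\<in>{1..n-1}. [:1, zeta_weight n i:]) \<le> (\<Sum>i\<in>{1..n-1}. degree [:1, zeta_weight n i:])"
    using degree_prod_sum_le[of "{1..n-1}" "\<lambda>i. [:1, zeta_weight n i:]"] by (simp add: o_def)
  also have "\<dots> \<le> (\<Sum>i\<in>{1..n-1}. 1)" by (intro sum_mono) auto
  also have "\<dots> = n - 1" by simp
  finally show "degree (\<Prod>i\<in>{1..n-1}. [:1, zeta_weight n i:]) < card ?A"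
    using card_A n by linarith
  have "degree (\<Sum>j<n. [:1, 1:] ^ j :: complex poly) \<le> n - 1"
    by (rule degree_sum_le) (auto intro: order.trans[OF degree_power_le])
  then show "degree (smult (1 / of_nat n) (\<Sum>j<n. [:1, 1:] ^ j) :: complex poly) < card ?A"
    using card_A n by (simp add: degree_smult_eq)
  fix u assume "u \<in> ?A"
  then consider "u = 0" | k where "k \<in> {1..n-1}" "u = zeta n ^ k - 1" by auto
  then show "poly (\<Prod>i\<in>{1..n-1}. [:1, zeta_weight n i:]) u = poly (smult (1 / of_nat n) (\<Sum>j<n. [:1, 1:] ^ j)) u"
  proof cases
    case 1
    then show ?thesis using n by (simp add: poly_prod poly_sum)
  next
    case 2
    have ne: "zeta n ^ k \<noteq> 1" using 2 n zeta_power_neq_1 by auto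
    have "poly (\<Prod>i\<in>{1..n-1}. [:1, zeta_weight n i:]) u = (\<Prod>i\<in>{1..n-1}. 1 + u * zeta_weight n i)"
      by (simp add: poly_prod)
    also have "\<dots> = 0"
      using 2 ne by (intro prod_zero bexI[of _ k]) (auto simp: zeta_weight_def field_simps)
    finally have lhs: "poly (\<Prod>i\<in>{1..n-1}. [:1, zeta_weight n i:]) u = 0" .
    have "(zeta n ^ k) ^ n = 1"
      using n by (simp add: power_mult[symmetric] zeta_power_eq_1_iff)
    then have "(\<Sum>j<n. (zeta n ^ k) ^ j) = 0"
      using ne by (simp add: geometric_sum)
    then show ?thesis using lhs 2 by (simp add: poly_sum)
  qed
qed

lemma coeff_one_plus_X_power: "coeff ([:1, 1:] ^ j :: 'a::comm_semiring_1 poly) k = of_nat (j choose k)"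
proof (cases "k \<le> j")
  case False
  have "degree ([:1, 1:] ^ j :: 'a poly) \<le> j"
    using degree_power_le[of "[:1, 1::'a:]" j] by simp
  then show ?thesis using False by (simp add: coeff_eq_0 binomial_eq_0)
qed (simp add: coeff_linear_poly_power)

lemma esym_zeta_weight:
  assumes "n \<ge> 1"
  shows "esym {1..n-1} (zeta_weight n) k = of_nat (n choose (k + 1)) / of_nat n"
proof -
  have "(\<Sum>j<n. j choose k) = (\<Sum>j\<le>n - 1. j choose k)"
    using assms by (intro sum.cong) auto
  also have "\<dots> = n choose (k + 1)"
    using assms sum_choose_upper[of k "n - 1"] by simp
  finally have hockey: "(\<Sum>j<n. of_nat (j choose k)) = (of_nat (n choose (k + 1)) :: complex)"
    by (metis of_nat_sum)
  have "esym {1..n-1} (zeta_weight n) k = coeff (\<Prod>i\<in>{1..n-1}. [:1, zeta_weight n i:]) k"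
    by (simp add: coeff_prod_linear_factors)
  also have "\<dots> = of_nat (n choose (k + 1)) / of_nat n"
    unfolding prod_linear_zeta_weight[OF assms]
    by (simp add: coeff_sum coeff_one_plus_X_power hockey)
  finally show ?thesis .
qed

section \<open>Y as a monomial symmetric function\<close>

lemma mset_map_if_mem:
  assumes "distinct l" "A \<subseteq> set l"
  shows "mset (map (\<lambda>i. if i \<in> A then u else v) l)
           = replicate_mset (card A) u + replicate_mset (length l - card A) v"
proof -
  define g where "g i = (if i \<in> A then u else v)" for i
  have fin: "finite A" using assms(2) finite_subset by blast
  have "mset l = mset_set A + mset_set (set l - A)"
    using assms fin by (simp add: mset_set_set[symmetric] mset_set_Union[symmetric] Un_absorb1)
  then have "mset (map g l) = image_mset g (mset_set A) + image_mset g (mset_set (set l - A))"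
    by simp
  also have "image_mset g (mset_set A) = image_mset (\<lambda>_. u) (mset_set A)"
    using fin by (intro image_mset_cong) (simp add: g_def)
  also have "image_mset g (mset_set (set l - A)) = image_mset (\<lambda>_. v) (mset_set (set l - A))"
    by (intro image_mset_cong) (simp add: g_def)
  finally show ?thesis
    using assms fin by (simp add: g_def image_mset_const_eq card_Diff_subset distinct_card)
qed

lemma bij_betw_subsets_permutations_of_multiset:
  assumes l: "distinct l" "length l = a + b" and "u \<noteq> v"
  shows "bij_betw (\<lambda>A. map (\<lambda>i. if i \<in> A then u else v) l) {A. A \<subseteq> set l \<and> card A = a}
           (permutations_of_multiset (replicate_mset a u + replicate_mset b v))"
proof -
  define f where "f = (\<lambda>A. map (\<lambda>i. if i \<in> A then u else v) l)"
  define \<psi> where "\<psi> \<sigma> = {l ! k | k. k < length l \<and> \<sigma> ! k = u}" for \<sigma> :: "'b list"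
  define M where "M = replicate_mset a u + replicate_mset b v"
  have f_\<psi>: "f (\<psi> \<sigma>) = \<sigma>" if "\<sigma> \<in> permutations_of_multiset M" for \<sigma>
  proof (rule nth_equalityI)
    have "mset \<sigma> = M" using that by (rule permutations_of_multisetD)
    then have len: "length \<sigma> = length l" and vals: "set \<sigma> \<subseteq> {u, v}"
      using l by (auto simp: M_def dest: arg_cong[of _ _ size] arg_cong[of _ _ set_mset] split: if_splits)
    then show "length (f (\<psi> \<sigma>)) = length \<sigma>" by (simp add: f_def)
    fix k assume "k < length (f (\<psi> \<sigma>))"
    then have k: "k < length l" by (simp add: f_def)
    then have "l ! k \<in> \<psi> \<sigma> \<longleftrightarrow> \<sigma> ! k = u"
      unfolding \<psi>_def using l by (auto simp: nth_eq_iff_index_eq)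
    moreover have "\<sigma> ! k \<in> {u, v}"
      using k len vals by (metis nth_mem subsetD)
    ultimately show "f (\<psi> \<sigma>) ! k = \<sigma> ! k"
      using k by (auto simp: f_def)
  qed
  have "bij_betw f {A. A \<subseteq> set l \<and> card A = a} (permutations_of_multiset M)"
  proof (rule bij_betw_byWitness[where f' = \<psi>])
    show "\<forall>A\<in>{A. A \<subseteq> set l \<and> card A = a}. \<psi> (f A) = A"
    proof
      fix A assume "A \<in> {A. A \<subseteq> set l \<and> card A = a}"
      then have "A \<subseteq> set l" by simp
      have "\<psi> (f A) = {l ! k | k. k < length l \<and> l ! k \<in> A}"
        using \<open>u \<noteq> v\<close> by (auto simp: \<psi>_def f_def split: if_splits)
      also have "\<dots> = A"
        using \<open>A \<subseteq> set l\<close> by (auto simp: in_set_conv_nth) (metis in_set_conv_nth subsetD)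
      finally show "\<psi> (f A) = A" .
    qed
    show "\<forall>\<sigma>\<in>permutations_of_multiset M. f (\<psi> \<sigma>) = \<sigma>"
      using f_\<psi> by blast
    show "f ` {A. A \<subseteq> set l \<and> card A = a} \<subseteq> permutations_of_multiset M"
    proof (rule image_subsetI, rule permutations_of_multisetI)
      fix A assume "A \<in> {A. A \<subseteq> set l \<and> card A = a}"
      then show "mset (f A) = M"
        using l mset_map_if_mem[of l A u v] by (simp add: f_def M_def)
    qed
    show "\<psi> ` permutations_of_multiset M \<subseteq> {A. A \<subseteq> set l \<and> card A = a}"
    proof clarify
      fix \<sigma> assume \<sigma>: "\<sigma> \<in> permutations_of_multiset M"
      have sub: "\<psi> \<sigma> \<subseteq> set l" by (auto simp: \<psi>_def)
      have "M = mset (f (\<psi> \<sigma>))"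
        using f_\<psi>[OF \<sigma>] permutations_of_multisetD[OF \<sigma>] by simp
      also have "\<dots> = replicate_mset (card (\<psi> \<sigma>)) u + replicate_mset (length l - card (\<psi> \<sigma>)) v"
        unfolding f_def using l(1) sub by (rule mset_map_if_mem)
      finally have "count M u = card (\<psi> \<sigma>)" using \<open>u \<noteq> v\<close> by simp
      then show "\<psi> \<sigma> \<subseteq> set l \<and> card (\<psi> \<sigma>) = a"
        using sub \<open>u \<noteq> v\<close> by (simp add: M_def)
    qed
  qed
  then show ?thesis unfolding f_def M_def .
qed

lemma sum_permutations_two_one:
  assumes "finite S" "card S = a + b"
  shows "(\<Sum>\<sigma>\<in>permutations_of_multiset (replicate_mset a 2 + replicate_mset b (1::int)).
            \<Prod>k<length \<sigma>. (1 - zeta n ^ (sorted_list_of_set S ! k)) powi (- (\<sigma> ! k)))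
         = (\<Sum>A\<in>{A. A \<subseteq> S \<and> card A = a}. (\<Prod>i\<in>S. zeta_weight n i) * (\<Prod>i\<in>A. zeta_weight n i))"
proof -
  define l where "l = sorted_list_of_set S"
  have l: "distinct l" "length l = a + b" "set l = S"
    using assms by (auto simp: l_def)
  define F where "F \<sigma> = (\<Prod>k<length \<sigma>. (1 - zeta n ^ (l ! k)) powi (- (\<sigma> ! k)))" for \<sigma> :: "int list"
  have "(\<Sum>\<sigma>\<in>permutations_of_multiset (replicate_mset a 2 + replicate_mset b 1). F \<sigma>)
          = (\<Sum>A\<in>{A. A \<subseteq> S \<and> card A = a}. F (map (\<lambda>i. if i \<in> A then 2 else 1) l))"
    using sum.reindex_bij_betw[OF bij_betw_subsets_permutations_of_multiset[OF l(1,2)], of 2 1 F]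
    by (simp add: l(3))
  also have "\<dots> = (\<Sum>A\<in>{A. A \<subseteq> S \<and> card A = a}. (\<Prod>i\<in>S. zeta_weight n i) * (\<Prod>i\<in>A. zeta_weight n i))"
  proof (intro sum.cong refl)
    fix A assume "A \<in> {A. A \<subseteq> S \<and> card A = a}"
    then have A: "A \<subseteq> S" "finite A" using assms(1) finite_subset by auto
    have "F (map (\<lambda>i. if i \<in> A then 2 else 1) l)
            = (\<Prod>k<length l. zeta_weight n (l ! k) * (if l ! k \<in> A then zeta_weight n (l ! k) else 1))"
      unfolding F_def by (intro prod.cong) (auto simp: zeta_weight_def power_int_minus power2_eq_square)
    also have "\<dots> = (\<Prod>i\<in>S. zeta_weight n i * (if i \<in> A then zeta_weight n i else 1))"
      using prod.reindex_bij_betw[OF bij_betw_nth[OF l(1) refl refl]] l(3) by simp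
    also have "\<dots> = (\<Prod>i\<in>S. zeta_weight n i) * (\<Prod>i\<in>A. zeta_weight n i)"
      using A assms(1) by (simp add: prod.distrib prod.If_cases Int_absorb1 Int_absorb2)
    finally show "F (map (\<lambda>i. if i \<in> A then 2 else 1) l)
                    = (\<Prod>i\<in>S. zeta_weight n i) * (\<Prod>i\<in>A. zeta_weight n i)" .
  qed
  finally show ?thesis by (simp add: F_def l_def)
qed

lemma bij_betw_sorted_list_of_set:
  assumes "finite X"
  shows "bij_betw sorted_list_of_set {S. S \<subseteq> X \<and> card S = k}
           {xs. sorted_wrt (<) xs \<and> length xs = k \<and> set xs \<subseteq> X}"
proof (rule bij_betw_byWitness[where f' = set])
  have set_sorted: "set (sorted_list_of_set S) = S" if "S \<subseteq> X" for S
    using finite_subset[OF that assms] by simp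
  then show "\<forall>S\<in>{S. S \<subseteq> X \<and> card S = k}. set (sorted_list_of_set S) = S"
    by simp
  show "\<forall>xs\<in>{xs. sorted_wrt (<) xs \<and> length xs = k \<and> set xs \<subseteq> X}. sorted_list_of_set (set xs) = xs"
    by (auto intro: strict_sorted_equal)
  show "sorted_list_of_set ` {S. S \<subseteq> X \<and> card S = k}
          \<subseteq> {xs. sorted_wrt (<) xs \<and> length xs = k \<and> set xs \<subseteq> X}"
    using set_sorted assms finite_subset by auto
  show "set ` {xs. sorted_wrt (<) xs \<and> length xs = k \<and> set xs \<subseteq> X} \<subseteq> {S. S \<subseteq> X \<and> card S = k}"
    by (auto simp: strict_sorted_iff distinct_card)
qed

lemma YY_two_one_eq_msym21:
  "YY n (replicate a 2 @ replicate b 1) = msym21 {1..n-1} (zeta_weight n) a b"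
proof -
  define M where "M = replicate_mset a 2 + replicate_mset b (1::int)"
  define F where "F \<sigma> xs = (\<Prod>k<length \<sigma>. (1 - zeta n ^ (xs ! k)) powi (- (\<sigma> ! k)))" for \<sigma> :: "int list" and xs
  have "YY n (replicate a 2 @ replicate b 1)
          = (\<Sum>\<sigma>\<in>permutations_of_multiset M.
               \<Sum>xs\<in>{xs. sorted_wrt (<) xs \<and> length xs = a + b \<and> set xs \<subseteq> {1..n-1}}. F \<sigma> xs)"
    unfolding YY_def ZZ_def M_def F_def
    by (intro sum.cong refl) (auto dest!: permutations_of_multisetD dest: arg_cong[of _ _ size])
  also have "\<dots> = (\<Sum>xs\<in>{xs. sorted_wrt (<) xs \<and> length xs = a + b \<and> set xs \<subseteq> {1..n-1}}.
                     \<Sum>\<sigma>\<in>permutations_of_multiset M. F \<sigma> xs)"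
    by (rule sum.swap)
  also have "\<dots> = (\<Sum>S\<in>{S. S \<subseteq> {1..n-1} \<and> card S = a + b}.
                     \<Sum>\<sigma>\<in>permutations_of_multiset M. F \<sigma> (sorted_list_of_set S))"
    by (rule sum.reindex_bij_betw[OF bij_betw_sorted_list_of_set, symmetric]) simp
  also have "\<dots> = msym21 {1..n-1} (zeta_weight n) a b"
    unfolding msym21_def M_def F_def
    by (intro sum.cong refl sum_permutations_two_one) (auto intro: finite_subset)
  finally show ?thesis .
qed

lemma choose_mult_complement:
  assumes "L \<le> M" "M < N"
  shows "(N - 1 - M + L choose L) * (N choose (M - L + 1)) = (N choose (M + 1)) * (M + 1 choose L)"
proof -
  have "(N choose (M + 1)) * (M + 1 choose (M + 1 - L))
          = (N choose (M + 1 - L)) * (N - (M + 1 - L) choose (M + 1 - (M + 1 - L)))"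
    using assms by (intro choose_mult) auto
  moreover have "M + 1 choose (M + 1 - L) = M + 1 choose L"
    using assms by (subst binomial_symmetric) auto
  moreover have "M + 1 - L = M - L + 1" "N - (M + 1 - L) = N - 1 - M + L" "M + 1 - (M + 1 - L) = L"
    using assms by auto
  ultimately show ?thesis by (simp add: mult.commute)
qed

lemma sum_YY_two_one_closed_form:
  fixes N M L :: nat
  assumes "L \<le> M" "M < N"
  shows "(\<Sum>k<min (N - 1 - M) L. of_nat ((N - M + L - 3 - 2 * k) choose (L - 1 - k))
            * YY N (replicate (M - L + 1 + k) 2 @ replicate (N - M + L - 3 - 2 * k) 1))
         = 1 / (of_nat N * of_nat (M + 1)) * of_nat (N - 1 choose M)
             * (of_nat (N choose L) - of_nat (M + 1 choose L))"
    (is "?lhs = ?rhs")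
proof -
  let ?e = "esym {1..N-1} (zeta_weight N)"
  have eqs: "2 * (N - 1) - M - (N - L - 1) = N - 1 - M + L" "N - 1 - (N - L - 1) = L"
    "M + (N - L - 1) - (N - 1) = M - L" "N - 1 - M + L - 2 - 2 * k = N - M + L - 3 - 2 * k" for k
    using assms by auto
  have "?e M * ?e (N - L - 1) = of_nat (N - 1 - M + L choose L) * ?e (N - 1) * ?e (M - L)
          + (\<Sum>k<min (N - 1 - M) L. of_nat ((N - M + L - 3 - 2 * k) choose (L - 1 - k))
               * msym21 {1..N-1} (zeta_weight N) (M - L + 1 + k) (N - M + L - 3 - 2 * k))"
    by (rule esym_mult_split[of "{1..N-1}" "N - 1" M "N - L - 1", unfolded eqs]) (use assms in auto)
  also have "(\<Sum>k<min (N - 1 - M) L. of_nat ((N - M + L - 3 - 2 * k) choose (L - 1 - k))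
               * msym21 {1..N-1} (zeta_weight N) (M - L + 1 + k) (N - M + L - 3 - 2 * k)) = ?lhs"
    by (simp only: YY_two_one_eq_msym21)
  finally have "?lhs = ?e M * ?e (N - L - 1) - of_nat (N - 1 - M + L choose L) * ?e (N - 1) * ?e (M - L)"
    by (simp add: algebra_simps)
  also have "\<dots> = of_nat (N choose (M + 1)) * of_nat (N choose (N - L)) / of_nat N ^ 2
                      - of_nat (N - 1 - M + L choose L) * of_nat (N choose (M - L + 1)) / of_nat N ^ 2"
  proof -
    have "?e k = of_nat (N choose (k + 1)) / of_nat N" for k
      using assms by (intro esym_zeta_weight) auto
    moreover have "N - L - 1 + 1 = N - L" "N - 1 + 1 = N" "M - L + 1 = Suc (M - L)" using assms by auto
    ultimately show ?thesis by (simp add: power2_eq_square)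
  qed
  also have "\<dots> = of_nat (N choose (M + 1)) * (of_nat (N choose L) - of_nat (M + 1 choose L)) / of_nat N ^ 2"
    using assms arg_cong[OF choose_mult_complement[OF assms], of "of_nat :: nat \<Rightarrow> complex"]
    by (simp add: binomial_symmetric[of L N, symmetric] diff_divide_distrib right_diff_distrib)
  also have "\<dots> = ?rhs"
  proof -
    have "of_nat (M + 1) * (of_nat (N choose (M + 1)) :: complex) = of_nat N * of_nat (N - 1 choose M)"
      using arg_cong[OF binomial_absorption[of M N], of "of_nat :: nat \<Rightarrow> complex"]
      by (simp add: distrib_right)
    then have "(of_nat (N choose (M + 1)) :: complex) = of_nat N * of_nat (N - 1 choose M) / of_nat (M + 1)"
      by (simp add: eq_divide_eq mult.commute del: of_nat_Suc)
    then show ?thesis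
      using assms by (simp add: power2_eq_square)
  qed
  finally show ?thesis .
qed

lemma binomZ_of_nat: "binomZ (int a) (int b) = of_nat (a choose b)"
  by (simp add: binomZ_def)

lemma Y21_of_nat: "Y21 n (int p) (int q) = YY n (replicate p 2 @ replicate q 1)"
  by (simp add: Y21_def)

lemma sum_binomZ_Y21_closed_form:
  fixes n m l :: int
  assumes "n - 1 \<ge> m" and "m \<ge> l" and "l \<ge> 0"
  shows "(\<Sum>j \<in> {0..n-m-2}. binomZ (n-m+l-3-2*j) (l-1-j) * Y21 (nat n) (m-l+1+j) (n-m+l-3-2*j))
           = 1 / (of_int n * of_int (m+1)) * binomZ (n-1) m * (binomZ n l - binomZ (m+1) l)"
proof -
  define N M L where "N = nat n" and "M = nat m" and "L = nat l"
  have nml: "n = int N" "m = int M" "l = int L"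
    using assms unfolding N_def M_def L_def by simp_all
  have LMN: "L \<le> M" "M < N" using assms nml by auto
  define F where "F j = binomZ (n-m+l-3-2*j) (l-1-j) * Y21 (nat n) (m-l+1+j) (n-m+l-3-2*j)" for j
  have "(\<Sum>j \<in> {0..n-m-2}. F j) = (\<Sum>j \<in> int ` {..<min (N - 1 - M) L}. F j)"
  proof (rule sum.mono_neutral_right)
    show "int ` {..<min (N - 1 - M) L} \<subseteq> {0..n-m-2}" using nml by auto
    show "\<forall>j \<in> {0..n-m-2} - int ` {..<min (N - 1 - M) L}. F j = 0"
    proof
      fix j assume j: "j \<in> {0..n-m-2} - int ` {..<min (N - 1 - M) L}"
      have "l \<le> j"
      proof (rule ccontr)
        assume "\<not> l \<le> j"
        then have "nat j \<in> {..<min (N - 1 - M) L}" using j nml by auto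
        then have "j \<in> int ` {..<min (N - 1 - M) L}"
          using j by (intro image_eqI[of _ int "nat j"]) auto
        then show False using j by blast
      qed
      then have "l - 1 - j < 0" by simp
      then show "F j = 0" by (simp add: F_def binomZ_def)
    qed
  qed simp
  also have "\<dots> = (\<Sum>k<min (N - 1 - M) L. F (int k))"
    by (simp add: sum.reindex)
  also have "\<dots> = (\<Sum>k<min (N - 1 - M) L. of_nat ((N - M + L - 3 - 2 * k) choose (L - 1 - k))
                     * YY N (replicate (M - L + 1 + k) 2 @ replicate (N - M + L - 3 - 2 * k) 1))"
  proof (intro sum.cong refl)
    fix k assume "k \<in> {..<min (N - 1 - M) L}"
    then have "n-m+l-3-2*int k = int (N - M + L - 3 - 2 * k)" "l-1-int k = int (L - 1 - k)"
      "m-l+1+int k = int (M - L + 1 + k)" using nml LMN by auto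
    then show "F (int k) = of_nat ((N - M + L - 3 - 2 * k) choose (L - 1 - k))
                 * YY N (replicate (M - L + 1 + k) 2 @ replicate (N - M + L - 3 - 2 * k) 1)"
      unfolding F_def by (simp only: binomZ_of_nat Y21_of_nat nml nat_int)
  qed
  also have "\<dots> = 1 / (of_nat N * of_nat (M + 1)) * of_nat (N - 1 choose M)
                    * (of_nat (N choose L) - of_nat (M + 1 choose L))"
    by (rule sum_YY_two_one_closed_form[OF LMN])
  also have "\<dots> = 1 / (of_int n * of_int (m+1)) * binomZ (n-1) m * (binomZ n l - binomZ (m+1) l)"
  proof -
    have "n - 1 = int (N - 1)" "m + 1 = int (M + 1)" using nml LMN by auto
    then show ?thesis unfolding nml by (simp only: binomZ_of_nat) simp
  qed
  finally show ?thesis unfolding F_def .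
qed

lemma Y21_closed_form:
  fixes n m :: int
  assumes "n - 1 \<ge> m" and "m \<ge> 1"
  shows "Y21 (nat n) m (n-m-2) = of_int (n-m-1) / (of_int n * of_int (m+1)) * binomZ (n-1) m"
proof (cases "m = n - 1")
  case True
  then show ?thesis by (simp add: Y21_def)
next
  case False
  have "(\<Sum>j \<in> {0..n-m-2}. binomZ (n-m+1-3-2*j) (1-1-j) * Y21 (nat n) (m-1+1+j) (n-m+1-3-2*j))
          = (\<Sum>j \<in> {0}. binomZ (n-m+1-3-2*j) (1-1-j) * Y21 (nat n) (m-1+1+j) (n-m+1-3-2*j))"
    using False assms by (intro sum.mono_neutral_right) (auto simp: binomZ_def)
  also have "\<dots> = Y21 (nat n) m (n-m-2)"
    using False assms by (simp add: binomZ_def)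
  finally have "Y21 (nat n) m (n-m-2) = 1 / (of_int n * of_int (m+1)) * binomZ (n-1) m * (binomZ n 1 - binomZ (m+1) 1)"
    using sum_binomZ_Y21_closed_form[of m n 1] assms by simp
  moreover have "binomZ n 1 - binomZ (m+1) 1 = of_int (n-m-1)"
    using assms by (simp add: binomZ_def of_nat_diff)
  ultimately show ?thesis by simp
qed

theorem theorem2:
  fixes n m l :: int
  assumes "n - 1 \<ge> m" and "m \<ge> l" and "l \<ge> 0"
  shows "(\<Sum>j \<in> {0..n-m-2}. binomZ (n-m+l-3-2*j) (l-1-j) * Y21 (nat n) (m-l+1+j) (n-m+l-3-2*j))
           = 1 / (of_int n * of_int (m+1)) * binomZ (n-1) m * (binomZ n l - binomZ (m+1) l)
         \<and> (l = 1 \<longrightarrow> Y21 (nat n) m (n-m-2) = of_int (n-m-1) / (of_int n * of_int (m+1)) * binomZ (n-1) m)"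
  using sum_binomZ_Y21_closed_form[OF assms] Y21_closed_form[OF assms(1)] assms(2) by blast

end
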